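(* Every irreflexive relation $R\subseteq\Sigma^*\times\Sigma^*$ that is left synchronous, and every irreflexive relation that is right synchronous, has a rational asymmetric partition.
   Context: A transducer over a finite alphabet $\Sigma$ has finitely many states, transitions labelled $x/y$ with $x,y\in\Sigma\cup\{\lambda\}$ ($\lambda$ the empty word), initial and final states; it realizes the set of input/output label pairs of its accepting computations. A relation is rational if it is realized by some transducer. A transducer is letter-to-letter if all labels are $\sigma/\tau$ with $\sigma,\tau\in\Sigma$. The product of relations is $R_1R_2=\{u_1u_2/v_1v_2 : u_1/v_1\in R_1,\ u_2/v_2\in R_2\}$. $R$ is left synchronous if it is a finite union of relations each of the form $S(A\times\{\lambda\})$ or $S(\{\lambda\}\times A)$, where $A\subseteq\Sigma^*$ is regular and $S$ is realized by a letter-to-letter transducer; it is right synchronous if it is a finite union of relations of the form $(A\times\{\lambda\})S$ or $(\{\lambda\}\times A)S$. A relation is irreflexive if it contains no pair $u/u$; a relation $A$ is asymmetric if $x/y\in A$ implies $y/x\notin A$. A rational asymmetric partition of an irreflexive relation $I$ is a partition $\{A,B\}$ of $I$ into two asymmetric rational relations. *)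

theory Defs
  imports Main
begin

text \<open>Words over a finite alphabet: the alphabet is a type 'a of class finite,
 words are lists, the empty word lambda is []. A relation is a set of pairs of words.\<close>

type_synonym 'a wrel = "('a list \<times> 'a list) set"

text \<open>Transducers: finitely many states (natural numbers), transitions labelled x/y
 with x, y in Sigma or lambda (None encodes lambda).\<close>

record 'a transducer =
  t_states :: "nat set"
  t_init   :: "nat set"
  t_final  :: "nat set"
  t_trans  :: "(nat \<times> 'a option \<times> 'a option \<times> nat) set"

definition wf_transducer :: "'a transducer \<Rightarrow> bool" where
  "wf_transducer T \<longleftrightarrow> finite (t_states T) \<and> t_init T \<subseteq> t_states T \<and>
     t_final T \<subseteq> t_states T \<and>
     (\<forall>(q, x, y, p) \<in> t_trans T. q \<in> t_states T \<and> p \<in> t_states T)"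

definition opt_word :: "'a option \<Rightarrow> 'a list" where
  "opt_word x = (case x of None \<Rightarrow> [] | Some a \<Rightarrow> [a])"

inductive t_run :: "'a transducer \<Rightarrow> nat \<Rightarrow> 'a list \<Rightarrow> 'a list \<Rightarrow> nat \<Rightarrow> bool" for T where
  t_run_nil: "q \<in> t_states T \<Longrightarrow> t_run T q [] [] q"
| t_run_step: "(q, x, y, p) \<in> t_trans T \<Longrightarrow> t_run T p u v r \<Longrightarrow>
                 t_run T q (opt_word x @ u) (opt_word y @ v) r"

definition realizes :: "'a transducer \<Rightarrow> 'a wrel" where
  "realizes T = {(u, v). \<exists>q\<in>t_init T. \<exists>p\<in>t_final T. t_run T q u v p}"

definition rational_rel :: "'a wrel \<Rightarrow> bool" where
  "rational_rel R \<longleftrightarrow> (\<exists>T. wf_transducer T \<and> realizes T = R)"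

definition letter_to_letter :: "'a transducer \<Rightarrow> bool" where
  "letter_to_letter T \<longleftrightarrow> (\<forall>(q, x, y, p) \<in> t_trans T. x \<noteq> None \<and> y \<noteq> None)"

record 'a nfa =
  n_states :: "nat set"
  n_init   :: "nat set"
  n_final  :: "nat set"
  n_trans  :: "(nat \<times> 'a \<times> nat) set"

definition wf_nfa :: "'a nfa \<Rightarrow> bool" where
  "wf_nfa M \<longleftrightarrow> finite (n_states M) \<and> n_init M \<subseteq> n_states M \<and>
     n_final M \<subseteq> n_states M \<and>
     (\<forall>(q, a, p) \<in> n_trans M. q \<in> n_states M \<and> p \<in> n_states M)"

inductive n_run :: "'a nfa \<Rightarrow> nat \<Rightarrow> 'a list \<Rightarrow> nat \<Rightarrow> bool" for M where
  n_run_nil: "q \<in> n_states M \<Longrightarrow> n_run M q [] q"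
| n_run_step: "(q, a, p) \<in> n_trans M \<Longrightarrow> n_run M p w r \<Longrightarrow> n_run M q (a # w) r"

definition accepts :: "'a nfa \<Rightarrow> 'a list set" where
  "accepts M = {w. \<exists>q\<in>n_init M. \<exists>p\<in>n_final M. n_run M q w p}"

definition regular_lang :: "'a list set \<Rightarrow> bool" where
  "regular_lang A \<longleftrightarrow> (\<exists>M. wf_nfa M \<and> accepts M = A)"

definition rel_prod :: "'a wrel \<Rightarrow> 'a wrel \<Rightarrow> 'a wrel" where
  "rel_prod R1 R2 = {(u1 @ u2, v1 @ v2) | u1 u2 v1 v2. (u1, v1) \<in> R1 \<and> (u2, v2) \<in> R2}"

definition letter_to_letter_rel :: "'a wrel \<Rightarrow> bool" where
  "letter_to_letter_rel S \<longleftrightarrow> (\<exists>T. wf_transducer T \<and> letter_to_letter T \<and> realizes T = S)"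

definition left_sync_component :: "'a wrel \<Rightarrow> bool" where
  "left_sync_component R \<longleftrightarrow> (\<exists>S A. letter_to_letter_rel S \<and> regular_lang A \<and>
     (R = rel_prod S (A \<times> {[]}) \<or> R = rel_prod S ({[]} \<times> A)))"

definition right_sync_component :: "'a wrel \<Rightarrow> bool" where
  "right_sync_component R \<longleftrightarrow> (\<exists>S A. letter_to_letter_rel S \<and> regular_lang A \<and>
     (R = rel_prod (A \<times> {[]}) S \<or> R = rel_prod ({[]} \<times> A) S))"

definition left_synchronous :: "'a wrel \<Rightarrow> bool" where
  "left_synchronous R \<longleftrightarrow> (\<exists>F. finite F \<and> (\<forall>C\<in>F. left_sync_component C) \<and> R = \<Union>F)"

definition right_synchronous :: "'a wrel \<Rightarrow> bool" where
  "right_synchronous R \<longleftrightarrow> (\<exists>F. finite F \<and> (\<forall>C\<in>F. right_sync_component C) \<and> R = \<Union>F)"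

definition irreflexive_rel :: "'a wrel \<Rightarrow> bool" where
  "irreflexive_rel R \<longleftrightarrow> (\<forall>u. (u, u) \<notin> R)"

definition asymmetric_rel :: "'a wrel \<Rightarrow> bool" where
  "asymmetric_rel A \<longleftrightarrow> (\<forall>x y. (x, y) \<in> A \<longrightarrow> (y, x) \<notin> A)"

definition rational_asym_partition :: "'a wrel \<Rightarrow> 'a wrel \<Rightarrow> 'a wrel \<Rightarrow> bool" where
  "rational_asym_partition I A B \<longleftrightarrow> A \<union> B = I \<and> A \<inter> B = {} \<and>
     rational_rel A \<and> rational_rel B \<and> asymmetric_rel A \<and> asymmetric_rel B"

end

theory Submission
  imports Defs
begin

text \<open>Order the alphabet linearly and the words by the induced shortlex order W, a strict total
  order. For irreflexive R, the pieces R \<inter> W and R \<inter> W\<inverse> partition R into two asymmetric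
  relations, so only their rationality is at stake. A synchronous component is a product of a
  length-preserving S with a one-sided D (A \<times> {\<lambda>} or {\<lambda>} \<times> A), in either order. Gluing (u, v) in S
  to (x, y) in D yields a shortlex-increasing pair iff either |x| < |y|, or x = y = \<lambda> and u < v
  lexicographically. The first part is a product of rational relations, the second is S cut down
  by a transducer that guesses the first position where its two tapes differ. Converses of
  components are components of the same kind, which takes care of R \<inter> W\<inverse>.\<close>

lemma double_neq_Suc_double [simp]: "2 * (q::nat) \<noteq> Suc (2 * p)" "Suc (2 * p) \<noteq> 2 * (q::nat)"
  by presburger+

lemma opt_word_simps [simp]: "opt_word None = []" "opt_word (Some a) = [a]"
  by (simp_all add: opt_word_def)

lemma t_run_append:
  "t_run T q u v p \<Longrightarrow> t_run T p u' v' r \<Longrightarrow> t_run T q (u @ u') (v @ v') r"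
  by (induction rule: t_run.induct) (auto intro: t_run.intros)

lemma t_run_map:
  assumes "t_run T q u v p"
    and "\<And>q x y p. (q, x, y, p) \<in> t_trans T \<Longrightarrow> (g q, x, y, g p) \<in> t_trans T'"
    and "\<And>q. q \<in> t_states T \<Longrightarrow> g q \<in> t_states T'"
  shows "t_run T' (g q) u v (g p)"
  using assms(1) by (induction rule: t_run.induct) (auto intro: t_run.intros assms(2,3))

lemma t_run_reflect:
  assumes "t_run T' s u v r" "s = g q" "q \<in> t_states T" "wf_transducer T"
    and "\<And>q x y r. (g q, x, y, r) \<in> t_trans T' \<Longrightarrow> q \<in> t_states T \<Longrightarrow>
           \<exists>p. r = g p \<and> (q, x, y, p) \<in> t_trans T"
  shows "\<exists>p. r = g p \<and> t_run T q u v p"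
  using assms(1-3)
proof (induction arbitrary: q rule: t_run.induct)
  case (t_run_nil q')
  then show ?case by (auto intro: t_run.intros)
next
  case (t_run_step s x y s' u v r)
  then obtain p where p: "s' = g p" "(q, x, y, p) \<in> t_trans T" using assms(5) by blast
  then have "p \<in> t_states T" using assms(4) by (auto simp: wf_transducer_def)
  then obtain p' where "r = g p'" "t_run T p u v p'" using t_run_step p by blast
  then show ?case using p by (auto intro: t_run.intros)
qed

lemma rational_rel_empty: "rational_rel {}"
  unfolding rational_rel_def
  by (rule exI[of _ "\<lparr>t_states = {}, t_init = {}, t_final = {}, t_trans = {}\<rparr>"])
     (auto simp: wf_transducer_def realizes_def)

definition union_t :: "'a transducer \<Rightarrow> 'a transducer \<Rightarrow> 'a transducer" where
  "union_t T1 T2 = \<lparr>t_states = (\<lambda>q. 2*q) ` t_states T1 \<union> (\<lambda>q. Suc (2*q)) ` t_states T2,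
     t_init = (\<lambda>q. 2*q) ` t_init T1 \<union> (\<lambda>q. Suc (2*q)) ` t_init T2,
     t_final = (\<lambda>q. 2*q) ` t_final T1 \<union> (\<lambda>q. Suc (2*q)) ` t_final T2,
     t_trans = {(2*q, x, y, 2*p) | q x y p. (q, x, y, p) \<in> t_trans T1} \<union>
               {(Suc (2*q), x, y, Suc (2*p)) | q x y p. (q, x, y, p) \<in> t_trans T2}\<rparr>"

lemma wf_union_t: "wf_transducer T1 \<Longrightarrow> wf_transducer T2 \<Longrightarrow> wf_transducer (union_t T1 T2)"
  unfolding wf_transducer_def union_t_def by auto

lemma realizes_union_t:
  assumes "wf_transducer T1" "wf_transducer T2"
  shows "realizes (union_t T1 T2) = realizes T1 \<union> realizes T2"
proof (rule equalityI; rule subrelI)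
  fix u v assume "(u, v) \<in> realizes (union_t T1 T2)"
  then obtain s r where s: "s \<in> t_init (union_t T1 T2)" "r \<in> t_final (union_t T1 T2)"
    and run: "t_run (union_t T1 T2) s u v r"
    unfolding realizes_def by auto
  show "(u, v) \<in> realizes T1 \<union> realizes T2"
  proof (cases "s \<in> (\<lambda>q. 2*q) ` t_init T1")
    case True
    then obtain q where q: "s = 2*q" "q \<in> t_init T1" by auto
    have "\<exists>p. r = 2*p \<and> t_run T1 q u v p"
      by (rule t_run_reflect[where g="\<lambda>q. 2*q", OF run q(1) _ assms(1)])
         (use q assms(1) in \<open>auto simp: union_t_def wf_transducer_def\<close>)
    then show ?thesis using s q unfolding realizes_def by (auto simp: union_t_def)
  next
    case False
    then obtain q where q: "s = Suc (2*q)" "q \<in> t_init T2" using s by (auto simp: union_t_def)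
    have "\<exists>p. r = Suc (2*p) \<and> t_run T2 q u v p"
      by (rule t_run_reflect[where g="\<lambda>q. Suc (2*q)", OF run q(1) _ assms(2)])
         (use q assms(2) in \<open>auto simp: union_t_def wf_transducer_def\<close>)
    then show ?thesis using s q unfolding realizes_def by (auto simp: union_t_def)
  qed
next
  fix u v assume "(u, v) \<in> realizes T1 \<union> realizes T2"
  then show "(u, v) \<in> realizes (union_t T1 T2)"
  proof
    assume "(u, v) \<in> realizes T1"
    then obtain q p where "q \<in> t_init T1" "p \<in> t_final T1" and run: "t_run T1 q u v p"
      unfolding realizes_def by auto
    moreover have "t_run (union_t T1 T2) (2*q) u v (2*p)"
      by (rule t_run_map[OF run]) (auto simp: union_t_def)
    ultimately show ?thesis unfolding realizes_def by (auto simp: union_t_def)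
  next
    assume "(u, v) \<in> realizes T2"
    then obtain q p where "q \<in> t_init T2" "p \<in> t_final T2" and run: "t_run T2 q u v p"
      unfolding realizes_def by auto
    moreover have "t_run (union_t T1 T2) ((\<lambda>q. Suc (2*q)) q) u v ((\<lambda>q. Suc (2*q)) p)"
      by (rule t_run_map[OF run]) (auto simp: union_t_def)
    ultimately show ?thesis unfolding realizes_def by (auto simp: union_t_def)
  qed
qed

lemma rational_rel_Un: "rational_rel R1 \<Longrightarrow> rational_rel R2 \<Longrightarrow> rational_rel (R1 \<union> R2)"
  unfolding rational_rel_def using wf_union_t realizes_union_t by metis

lemma rational_rel_Union: "finite F \<Longrightarrow> (\<And>C. C \<in> F \<Longrightarrow> rational_rel C) \<Longrightarrow> rational_rel (\<Union>F)"
  by (induction rule: finite_induct) (auto intro: rational_rel_Un rational_rel_empty)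

definition conc_t :: "'a transducer \<Rightarrow> 'a transducer \<Rightarrow> 'a transducer" where
  "conc_t T1 T2 = \<lparr>t_states = (\<lambda>q. 2*q) ` t_states T1 \<union> (\<lambda>q. Suc (2*q)) ` t_states T2,
     t_init = (\<lambda>q. 2*q) ` t_init T1,
     t_final = (\<lambda>q. Suc (2*q)) ` t_final T2,
     t_trans = {(2*q, x, y, 2*p) | q x y p. (q, x, y, p) \<in> t_trans T1} \<union>
               {(Suc (2*q), x, y, Suc (2*p)) | q x y p. (q, x, y, p) \<in> t_trans T2} \<union>
               {(2*q, None, None, Suc (2*p)) | q p. q \<in> t_final T1 \<and> p \<in> t_init T2}\<rparr>"

lemma wf_conc_t: "wf_transducer T1 \<Longrightarrow> wf_transducer T2 \<Longrightarrow> wf_transducer (conc_t T1 T2)"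
  unfolding wf_transducer_def conc_t_def by auto

lemma t_run_conc_t_split:
  assumes "t_run (conc_t T1 T2) s u v r" "s = 2*q" "q \<in> t_states T1" "r = Suc (2*p)"
    and "wf_transducer T1" "wf_transducer T2"
  shows "\<exists>u1 u2 v1 v2 q1 q2. u = u1 @ u2 \<and> v = v1 @ v2 \<and> t_run T1 q u1 v1 q1 \<and>
           q1 \<in> t_final T1 \<and> q2 \<in> t_init T2 \<and> t_run T2 q2 u2 v2 p"
  using assms(1-4)
proof (induction arbitrary: q rule: t_run.induct)
  case (t_run_nil q')
  then show ?case by simp
next
  case (t_run_step s x y s' u v r)
  from t_run_step.hyps(1) t_run_step.prems(1) consider
    (first) q' where "s' = 2*q'" "(q, x, y, q') \<in> t_trans T1"
  | (glue) q2 where "x = None" "y = None" "s' = Suc (2*q2)" "q \<in> t_final T1" "q2 \<in> t_init T2"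
    by (auto simp: conc_t_def)
  then show ?case
  proof cases
    case first
    then have "q' \<in> t_states T1" using assms(5) by (auto simp: wf_transducer_def)
    then obtain u1 u2 v1 v2 q1 q2 where "u = u1 @ u2" "v = v1 @ v2" "t_run T1 q' u1 v1 q1"
      "q1 \<in> t_final T1" "q2 \<in> t_init T2" "t_run T2 q2 u2 v2 p"
      using t_run_step first by blast
    then show ?thesis using first
      by (intro exI[of _ "opt_word x @ u1"] exI[of _ u2] exI[of _ "opt_word y @ v1"] exI[of _ v2]
          exI[of _ q1] exI[of _ q2]) (auto intro: t_run.intros)
  next
    case glue
    then have "q2 \<in> t_states T2" using assms(6) by (auto simp: wf_transducer_def)
    then obtain p' where "r = Suc (2*p')" "t_run T2 q2 u v p'"
      by (rule t_run_reflect[where g="\<lambda>q. Suc (2*q)", OF t_run_step.hyps(2) glue(3) _ assms(6),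
            elim_format]) (auto simp: conc_t_def)
    moreover have "t_run T1 q [] [] q" using t_run_step.prems(2) by (rule t_run_nil)
    ultimately show ?thesis using glue t_run_step.prems
      by (intro exI[of _ "[]"] exI[of _ u] exI[of _ "[]"] exI[of _ v] exI[of _ q] exI[of _ q2]) auto
  qed
qed

lemma realizes_conc_t:
  assumes "wf_transducer T1" "wf_transducer T2"
  shows "realizes (conc_t T1 T2) = rel_prod (realizes T1) (realizes T2)"
proof (rule equalityI; rule subrelI)
  fix u v assume "(u, v) \<in> realizes (conc_t T1 T2)"
  then obtain q p where "q \<in> t_init T1" "p \<in> t_final T2"
    and run: "t_run (conc_t T1 T2) (2*q) u v (Suc (2*p))"
    unfolding realizes_def by (auto simp: conc_t_def)
  moreover from \<open>q \<in> t_init T1\<close> have "q \<in> t_states T1"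
    using assms(1) by (auto simp: wf_transducer_def)
  ultimately show "(u, v) \<in> rel_prod (realizes T1) (realizes T2)"
    using t_run_conc_t_split[OF run refl _ refl assms]
    unfolding rel_prod_def realizes_def by blast
next
  fix u v assume "(u, v) \<in> rel_prod (realizes T1) (realizes T2)"
  then obtain u1 u2 v1 v2 q1 p1 q2 p2 where uv: "u = u1 @ u2" "v = v1 @ v2"
    and 1: "q1 \<in> t_init T1" "p1 \<in> t_final T1" "t_run T1 q1 u1 v1 p1"
    and 2: "q2 \<in> t_init T2" "p2 \<in> t_final T2" "t_run T2 q2 u2 v2 p2"
    unfolding rel_prod_def realizes_def by blast
  have run1: "t_run (conc_t T1 T2) (2*q1) u1 v1 (2*p1)"
    by (rule t_run_map[OF 1(3)]) (auto simp: conc_t_def)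
  have "t_run (conc_t T1 T2) ((\<lambda>q. Suc (2*q)) q2) u2 v2 ((\<lambda>q. Suc (2*q)) p2)"
    by (rule t_run_map[OF 2(3)]) (auto simp: conc_t_def)
  moreover have "(2*p1, None, None, Suc (2*q2)) \<in> t_trans (conc_t T1 T2)"
    using 1 2 by (auto simp: conc_t_def)
  ultimately have "t_run (conc_t T1 T2) (2*p1) u2 v2 (Suc (2*p2))"
    using t_run_step[of "2*p1" None None] by simp
  from t_run_append[OF run1 this] show "(u, v) \<in> realizes (conc_t T1 T2)"
    using uv 1 2 unfolding realizes_def by (auto simp: conc_t_def)
qed

lemma rational_rel_prod: "rational_rel R1 \<Longrightarrow> rational_rel R2 \<Longrightarrow> rational_rel (rel_prod R1 R2)"
  unfolding rational_rel_def using wf_conc_t realizes_conc_t by metis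

definition swap_t :: "'a transducer \<Rightarrow> 'a transducer" where
  "swap_t T = T\<lparr>t_trans := {(q, y, x, p) | q x y p. (q, x, y, p) \<in> t_trans T}\<rparr>"

lemma t_run_swap_t: "t_run T q u v p \<Longrightarrow> t_run (swap_t T) q v u p"
  by (induction rule: t_run.induct) (auto intro: t_run.intros simp: swap_t_def)

lemma swap_t_swap_t [simp]: "swap_t (swap_t T) = T"
proof -
  have "{(q, y, x, p) | q x y p. (q, y, x, p) \<in> t_trans T} = t_trans T" by auto
  then show ?thesis by (simp add: swap_t_def)
qed

lemma realizes_swap_t: "realizes (swap_t T) = (realizes T)\<inverse>"
proof -
  have "t_run (swap_t T) q u v p \<longleftrightarrow> t_run T q v u p" for q u v p
    by (metis t_run_swap_t swap_t_swap_t)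
  then show ?thesis unfolding realizes_def by (auto simp: swap_t_def)
qed

lemma wf_swap_t: "wf_transducer T \<Longrightarrow> wf_transducer (swap_t T)"
  unfolding wf_transducer_def swap_t_def by auto

lemma letter_to_letter_swap_t: "letter_to_letter T \<Longrightarrow> letter_to_letter (swap_t T)"
  unfolding letter_to_letter_def swap_t_def by auto

lemma rational_rel_converse: "rational_rel R \<Longrightarrow> rational_rel (R\<inverse>)"
  unfolding rational_rel_def using wf_swap_t realizes_swap_t by metis

lemma letter_to_letter_rel_converse: "letter_to_letter_rel S \<Longrightarrow> letter_to_letter_rel (S\<inverse>)"
  unfolding letter_to_letter_rel_def
  using letter_to_letter_swap_t wf_swap_t realizes_swap_t by metis

definition nonempty_output_t :: "'a nfa \<Rightarrow> 'a transducer" where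
  "nonempty_output_t M = \<lparr>t_states = (\<lambda>q. 2*q) ` n_states M \<union> (\<lambda>q. Suc (2*q)) ` n_states M,
     t_init = (\<lambda>q. 2*q) ` n_init M,
     t_final = (\<lambda>q. Suc (2*q)) ` n_final M,
     t_trans = {(2*q, None, Some a, Suc (2*p)) | q a p. (q, a, p) \<in> n_trans M} \<union>
               {(Suc (2*q), None, Some a, Suc (2*p)) | q a p. (q, a, p) \<in> n_trans M}\<rparr>"

lemma wf_nonempty_output_t: "wf_nfa M \<Longrightarrow> wf_transducer (nonempty_output_t M)"
  unfolding wf_transducer_def wf_nfa_def nonempty_output_t_def by auto

lemma t_run_nonempty_output_t_of_n_run:
  "n_run M q w p \<Longrightarrow> t_run (nonempty_output_t M) (Suc (2*q)) [] w (Suc (2*p))"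
proof (induction rule: n_run.induct)
  case (n_run_nil q)
  then show ?case by (auto intro: t_run_nil simp: nonempty_output_t_def)
next
  case (n_run_step q a p w r)
  then have "(Suc (2*q), None, Some a, Suc (2*p)) \<in> t_trans (nonempty_output_t M)"
    by (auto simp: nonempty_output_t_def)
  from t_run_step[OF this n_run_step.IH] show ?case by simp
qed

lemma n_run_of_t_run_nonempty_output_t:
  "t_run (nonempty_output_t M) s u w r \<Longrightarrow> s = Suc (2*q) \<Longrightarrow> q \<in> n_states M \<Longrightarrow> wf_nfa M \<Longrightarrow>
   \<exists>p. r = Suc (2*p) \<and> u = [] \<and> n_run M q w p"
proof (induction arbitrary: q rule: t_run.induct)
  case (t_run_nil q')
  then show ?case by (auto intro: n_run_nil)
next
  case (t_run_step s x y s' u v r)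
  then obtain a p where "x = None" "y = Some a" "s' = Suc (2*p)" "(q, a, p) \<in> n_trans M"
    by (auto simp: nonempty_output_t_def)
  moreover from this have "p \<in> n_states M" using t_run_step by (auto simp: wf_nfa_def)
  ultimately show ?case using t_run_step by (auto intro: n_run_step)
qed

lemma realizes_nonempty_output_t:
  assumes "wf_nfa M"
  shows "realizes (nonempty_output_t M) = {[]} \<times> (accepts M - {[]})"
proof (rule equalityI; rule subrelI)
  fix u v assume "(u, v) \<in> realizes (nonempty_output_t M)"
  then obtain q p where q: "q \<in> n_init M" "p \<in> n_final M"
    and "t_run (nonempty_output_t M) (2*q) u v (Suc (2*p))"
    unfolding realizes_def by (auto simp: nonempty_output_t_def)
  from this(3) obtain a q' v' where step: "(q, a, q') \<in> n_trans M" "v = a # v'"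
    and run: "t_run (nonempty_output_t M) (Suc (2*q')) u v' (Suc (2*p))"
    by (cases rule: t_run.cases) (auto simp: nonempty_output_t_def)
  moreover from step have "q' \<in> n_states M" using assms by (auto simp: wf_nfa_def)
  ultimately have "u = []" "n_run M q' v' p"
    using n_run_of_t_run_nonempty_output_t[OF run refl _ assms] by auto
  then show "(u, v) \<in> {[]} \<times> (accepts M - {[]})"
    using q step unfolding accepts_def by (auto intro: n_run_step)
next
  fix u v :: "'a list" assume "(u, v) \<in> {[]} \<times> (accepts M - {[]})"
  then obtain a v' q p where uv: "u = []" "v = a # v'" and q: "q \<in> n_init M" "p \<in> n_final M"
    and "n_run M q (a # v') p"
    unfolding accepts_def by (auto simp: neq_Nil_conv)
  from this(5) obtain q' where step: "(q, a, q') \<in> n_trans M" and run: "n_run M q' v' p"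
    by (cases rule: n_run.cases) auto
  from step have "(2*q, None, Some a, Suc (2*q')) \<in> t_trans (nonempty_output_t M)"
    by (auto simp: nonempty_output_t_def)
  from t_run_step[OF this t_run_nonempty_output_t_of_n_run[OF run]]
  have "t_run (nonempty_output_t M) (2*q) [] (a # v') (Suc (2*p))" by simp
  then show "(u, v) \<in> realizes (nonempty_output_t M)"
    using uv q unfolding realizes_def by (auto simp: nonempty_output_t_def)
qed

lemma rational_rel_Nil_times_nonempty:
  "regular_lang A \<Longrightarrow> rational_rel ({[]} \<times> (A - {[]}))"
  unfolding regular_lang_def rational_rel_def
  using wf_nonempty_output_t realizes_nonempty_output_t by metis

lemma t_run_letter_to_letter_length:
  "t_run T q u v p \<Longrightarrow> letter_to_letter T \<Longrightarrow> length u = length v"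
  by (induction rule: t_run.induct)
     (auto simp: letter_to_letter_def opt_word_def split: option.splits)

text \<open>The first copy reads equal letters on both tapes; a transition labelled a/b with (a, b) \<in> r
  marks the first difference and leads into the second copy, which runs unconstrained.\<close>

definition lex_t :: "'a transducer \<Rightarrow> 'a rel \<Rightarrow> 'a transducer" where
  "lex_t T r = \<lparr>t_states = (\<lambda>q. 2*q) ` t_states T \<union> (\<lambda>q. Suc (2*q)) ` t_states T,
     t_init = (\<lambda>q. 2*q) ` t_init T,
     t_final = (\<lambda>q. Suc (2*q)) ` t_final T,
     t_trans = {(2*q, x, x, 2*p) | q x p. (q, x, x, p) \<in> t_trans T} \<union>
               {(2*q, Some a, Some b, Suc (2*p)) | q a b p.
                  (q, Some a, Some b, p) \<in> t_trans T \<and> (a, b) \<in> r} \<union>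
               {(Suc (2*q), x, y, Suc (2*p)) | q x y p. (q, x, y, p) \<in> t_trans T}\<rparr>"

lemma wf_lex_t: "wf_transducer T \<Longrightarrow> wf_transducer (lex_t T r)"
  unfolding wf_transducer_def lex_t_def by auto

lemma t_run_lex_t_of_t_run:
  assumes "t_run T q u v p" "letter_to_letter T"
  shows "(u = v \<longrightarrow> t_run (lex_t T r) (2*q) u v (2*p)) \<and>
         ((u, v) \<in> lex r \<longrightarrow> t_run (lex_t T r) (2*q) u v (Suc (2*p))) \<and>
         t_run (lex_t T r) (Suc (2*q)) u v (Suc (2*p))"
  using assms(1)
proof (induction rule: t_run.induct)
  case (t_run_nil q)
  then show ?case by (auto intro!: t_run.t_run_nil simp: lex_t_def)
next
  case (t_run_step q x y q' u v p)
  then obtain a b where ab: "x = Some a" "y = Some b"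
    using assms(2) unfolding letter_to_letter_def by blast
  have len: "length u = length v"
    using t_run_letter_to_letter_length[OF t_run_step.hyps(2) assms(2)] .
  have same: "a = b \<Longrightarrow> (2*q, x, y, 2*q') \<in> t_trans (lex_t T r)"
    and differ: "(a, b) \<in> r \<Longrightarrow> (2*q, x, y, Suc (2*q')) \<in> t_trans (lex_t T r)"
    and free: "(Suc (2*q), x, y, Suc (2*q')) \<in> t_trans (lex_t T r)"
    using t_run_step.hyps(1) ab by (auto simp: lex_t_def)
  show ?case
    using t_run_step.IH ab len t_run.t_run_step[OF same] t_run.t_run_step[OF differ]
      t_run.t_run_step[OF free]
    by auto
qed

lemma t_run_of_t_run_lex_t:
  assumes "t_run (lex_t T r) s u v s'" "s = 2*q" "s' = Suc (2*p)" "q \<in> t_states T"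
    and "wf_transducer T" "letter_to_letter T"
  shows "t_run T q u v p \<and> (u, v) \<in> lex r"
  using assms(1-4)
proof (induction arbitrary: q rule: t_run.induct)
  case (t_run_nil q')
  then show ?case by simp
next
  case (t_run_step s x y s' u v r')
  from t_run_step.hyps(1) t_run_step.prems(1) consider
    (same) q' where "s' = 2*q'" "(q, x, y, q') \<in> t_trans T" "x = y"
  | (differ) q' a b where "x = Some a" "y = Some b" "s' = Suc (2*q')"
      "(q, Some a, Some b, q') \<in> t_trans T" "(a, b) \<in> r"
    by (auto simp: lex_t_def)
  then show ?case
  proof cases
    case same
    then have "q' \<in> t_states T" using assms(5) by (auto simp: wf_transducer_def)
    then have "t_run T q' u v p \<and> (u, v) \<in> lex r" using t_run_step same by blast
    then show ?thesis using same t_run.t_run_step[OF same(2)] by (auto intro: lex_append_leftI)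
  next
    case differ
    then have "q' \<in> t_states T" using assms(5) by (auto simp: wf_transducer_def)
    then obtain p' where "r' = Suc (2*p')" and run: "t_run T q' u v p'"
      by (rule t_run_reflect[where g="\<lambda>q. Suc (2*q)", OF t_run_step.hyps(2) differ(3) _ assms(5),
            elim_format]) (auto simp: lex_t_def)
    moreover have "length u = length v" using t_run_letter_to_letter_length[OF run assms(6)] .
    ultimately show ?thesis
      using differ t_run_step.prems t_run.t_run_step[OF differ(4) run] by auto
  qed
qed

lemma realizes_lex_t:
  assumes "wf_transducer T" "letter_to_letter T"
  shows "realizes (lex_t T r) = realizes T \<inter> lex r"
proof (rule equalityI; rule subrelI)
  fix u v assume "(u, v) \<in> realizes (lex_t T r)"
  then obtain q p where "q \<in> t_init T" "p \<in> t_final T"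
    and run: "t_run (lex_t T r) (2*q) u v (Suc (2*p))"
    unfolding realizes_def by (auto simp: lex_t_def)
  moreover from \<open>q \<in> t_init T\<close> have "q \<in> t_states T"
    using assms(1) by (auto simp: wf_transducer_def)
  ultimately show "(u, v) \<in> realizes T \<inter> lex r"
    using t_run_of_t_run_lex_t[OF run refl refl _ assms] unfolding realizes_def by blast
next
  fix u v assume "(u, v) \<in> realizes T \<inter> lex r"
  then show "(u, v) \<in> realizes (lex_t T r)"
    using t_run_lex_t_of_t_run[OF _ assms(2)] unfolding realizes_def
    by (fastforce simp: lex_t_def)
qed

lemma letter_to_letter_rel_length:
  "letter_to_letter_rel S \<Longrightarrow> (u, v) \<in> S \<Longrightarrow> length u = length v"
  unfolding letter_to_letter_rel_def realizes_def
  using t_run_letter_to_letter_length by blast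

lemma rational_rel_letter_to_letter_inter_lex:
  "letter_to_letter_rel S \<Longrightarrow> rational_rel (S \<inter> lex r)"
  unfolding letter_to_letter_rel_def rational_rel_def
  using wf_lex_t realizes_lex_t by metis

lemma rational_rel_letter_to_letter:
  "letter_to_letter_rel S \<Longrightarrow> rational_rel S"
  unfolding letter_to_letter_rel_def rational_rel_def by blast

lemma rel_prod_iff:
  "(w, z) \<in> rel_prod X Y \<longleftrightarrow> (\<exists>u x v y. w = u @ x \<and> z = v @ y \<and> (u, v) \<in> X \<and> (x, y) \<in> Y)"
  unfolding rel_prod_def by blast

lemma rel_prod_appendI: "(u, v) \<in> X \<Longrightarrow> (x, y) \<in> Y \<Longrightarrow> (u @ x, v @ y) \<in> rel_prod X Y"
  unfolding rel_prod_def by blast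

lemma converse_rel_prod: "(rel_prod X Y)\<inverse> = rel_prod (X\<inverse>) (Y\<inverse>)"
  unfolding rel_prod_def by blast

lemma rel_prod_inter_lenlex_right:
  assumes S: "\<And>u v. (u, v) \<in> S \<Longrightarrow> length u = length v"
    and D: "\<And>x y. (x, y) \<in> D \<Longrightarrow> x = [] \<or> y = []"
  shows "rel_prod S D \<inter> lenlex r =
           rel_prod S {(x, y) \<in> D. length x < length y} \<union>
           (if ([], []) \<in> D then S \<inter> lex r else {})"
proof (rule equalityI; rule subrelI)
  fix w z assume "(w, z) \<in> rel_prod S D \<inter> lenlex r"
  then have "(w, z) \<in> rel_prod S D" and ord: "(w, z) \<in> lenlex r" by auto
  then obtain u x v y where p: "w = u @ x" "z = v @ y" "(u, v) \<in> S" "(x, y) \<in> D"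
    unfolding rel_prod_iff by blast
  from ord have "length x < length y \<or> (x = [] \<and> y = [] \<and> (u, v) \<in> lex r)"
    unfolding p(1,2) using S[OF p(3)] D[OF p(4)] by (auto simp: lenlex_conv)
  then show "(w, z) \<in> rel_prod S {(x, y) \<in> D. length x < length y} \<union>
               (if ([], []) \<in> D then S \<inter> lex r else {})"
  proof
    assume "length x < length y"
    then have "(w, z) \<in> rel_prod S {(x, y) \<in> D. length x < length y}"
      unfolding p(1,2) using p(3,4) by (intro rel_prod_appendI) auto
    then show ?thesis ..
  qed (use p in auto)
next
  fix w z assume "(w, z) \<in> rel_prod S {(x, y) \<in> D. length x < length y} \<union>
                    (if ([], []) \<in> D then S \<inter> lex r else {})"
  then show "(w, z) \<in> rel_prod S D \<inter> lenlex r"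
  proof
    assume "(w, z) \<in> rel_prod S {(x, y) \<in> D. length x < length y}"
    then obtain u x v y where p: "w = u @ x" "z = v @ y" "(u, v) \<in> S" "(x, y) \<in> D"
      and "length x < length y"
      unfolding rel_prod_iff by blast
    then have "(w, z) \<in> lenlex r" using S[OF p(3)] by (simp add: lenlex_conv)
    moreover have "(w, z) \<in> rel_prod S D"
      unfolding p(1,2) using p(3,4) by (rule rel_prod_appendI)
    ultimately show ?thesis by blast
  next
    assume "(w, z) \<in> (if ([], []) \<in> D then S \<inter> lex r else {})"
    then have D0: "([], []) \<in> D" and "(w, z) \<in> S" "(w, z) \<in> lex r"
      by (auto split: if_splits)
    then have "(w, z) \<in> lenlex r" by (simp add: lenlex_conv lex_conv)
    moreover have "(w @ [], z @ []) \<in> rel_prod S D"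
      using \<open>(w, z) \<in> S\<close> D0 by (rule rel_prod_appendI)
    ultimately show ?thesis by simp
  qed
qed

lemma rel_prod_inter_lenlex_left:
  assumes S: "\<And>u v. (u, v) \<in> S \<Longrightarrow> length u = length v"
    and D: "\<And>x y. (x, y) \<in> D \<Longrightarrow> x = [] \<or> y = []"
  shows "rel_prod D S \<inter> lenlex r =
           rel_prod {(x, y) \<in> D. length x < length y} S \<union>
           (if ([], []) \<in> D then S \<inter> lex r else {})"
proof (rule equalityI; rule subrelI)
  fix w z assume "(w, z) \<in> rel_prod D S \<inter> lenlex r"
  then have "(w, z) \<in> rel_prod D S" and ord: "(w, z) \<in> lenlex r" by auto
  then obtain x u y v where p: "w = x @ u" "z = y @ v" "(x, y) \<in> D" "(u, v) \<in> S"
    unfolding rel_prod_iff by blast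
  from ord have "length x < length y \<or> (x = [] \<and> y = [] \<and> (u, v) \<in> lex r)"
    unfolding p(1,2) using D[OF p(3)] S[OF p(4)] by (auto simp: lenlex_conv)
  then show "(w, z) \<in> rel_prod {(x, y) \<in> D. length x < length y} S \<union>
               (if ([], []) \<in> D then S \<inter> lex r else {})"
  proof
    assume "length x < length y"
    then have "(w, z) \<in> rel_prod {(x, y) \<in> D. length x < length y} S"
      unfolding p(1,2) using p(3,4) by (intro rel_prod_appendI) auto
    then show ?thesis ..
  qed (use p in auto)
next
  fix w z assume "(w, z) \<in> rel_prod {(x, y) \<in> D. length x < length y} S \<union>
                    (if ([], []) \<in> D then S \<inter> lex r else {})"
  then show "(w, z) \<in> rel_prod D S \<inter> lenlex r"
  proof
    assume "(w, z) \<in> rel_prod {(x, y) \<in> D. length x < length y} S"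
    then obtain x u y v where p: "w = x @ u" "z = y @ v" "(x, y) \<in> D" "(u, v) \<in> S"
      and "length x < length y"
      unfolding rel_prod_iff by blast
    then have "(w, z) \<in> lenlex r" using S[OF p(4)] by (simp add: lenlex_conv)
    moreover have "(w, z) \<in> rel_prod D S"
      unfolding p(1,2) using p(3,4) by (rule rel_prod_appendI)
    ultimately show ?thesis by blast
  next
    assume "(w, z) \<in> (if ([], []) \<in> D then S \<inter> lex r else {})"
    then have D0: "([], []) \<in> D" and "(w, z) \<in> S" "(w, z) \<in> lex r"
      by (auto split: if_splits)
    then have "(w, z) \<in> lenlex r" by (simp add: lenlex_conv lex_conv)
    moreover have "([] @ w, [] @ z) \<in> rel_prod D S"
      using D0 \<open>(w, z) \<in> S\<close> by (rule rel_prod_appendI)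
    ultimately show ?thesis by simp
  qed
qed

lemma one_sided_regular:
  assumes "regular_lang A" "D = A \<times> {[]} \<or> D = {[]} \<times> A"
  shows "\<And>x y. (x, y) \<in> D \<Longrightarrow> x = [] \<or> y = []"
    and "rational_rel {(x, y) \<in> D. length x < length y}"
proof -
  show "\<And>x y. (x, y) \<in> D \<Longrightarrow> x = [] \<or> y = []" using assms(2) by auto
  from assms(2) show "rational_rel {(x, y) \<in> D. length x < length y}"
  proof
    assume "D = A \<times> {[]}"
    then have "{(x, y) \<in> D. length x < length y} = {}" by auto
    then show ?thesis by (simp only: rational_rel_empty)
  next
    assume "D = {[]} \<times> A"
    then have "{(x, y) \<in> D. length x < length y} = {[]} \<times> (A - {[]})" by auto
    then show ?thesis using rational_rel_Nil_times_nonempty[OF assms(1)] by (simp only:)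
  qed
qed

lemma rational_rel_if_empty: "rational_rel X \<Longrightarrow> rational_rel (if b then X else {})"
  by (simp add: rational_rel_empty)

lemma rational_left_sync_component_inter_lenlex:
  assumes "left_sync_component C"
  shows "rational_rel (C \<inter> lenlex r)"
proof -
  obtain S A D where S: "letter_to_letter_rel S" and A: "regular_lang A"
    and D: "D = A \<times> {[]} \<or> D = {[]} \<times> A" and C: "C = rel_prod S D"
    using assms unfolding left_sync_component_def by blast
  have eq: "C \<inter> lenlex r = rel_prod S {(x, y) \<in> D. length x < length y} \<union>
                       (if ([], []) \<in> D then S \<inter> lex r else {})"
    unfolding C
    by (rule rel_prod_inter_lenlex_right[OF letter_to_letter_rel_length[OF S] one_sided_regular(1)[OF A D]])
  have prod: "rational_rel (rel_prod S {(x, y) \<in> D. length x < length y})"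
    by (rule rational_rel_prod[OF rational_rel_letter_to_letter[OF S] one_sided_regular(2)[OF A D]])
  have lex: "rational_rel (if ([], []) \<in> D then S \<inter> lex r else {})"
    by (rule rational_rel_if_empty[OF rational_rel_letter_to_letter_inter_lex[OF S]])
  show ?thesis unfolding eq by (rule rational_rel_Un[OF prod lex])
qed

lemma rational_right_sync_component_inter_lenlex:
  assumes "right_sync_component C"
  shows "rational_rel (C \<inter> lenlex r)"
proof -
  obtain S A D where S: "letter_to_letter_rel S" and A: "regular_lang A"
    and D: "D = A \<times> {[]} \<or> D = {[]} \<times> A" and C: "C = rel_prod D S"
    using assms unfolding right_sync_component_def by blast
  have eq: "C \<inter> lenlex r = rel_prod {(x, y) \<in> D. length x < length y} S \<union>
                       (if ([], []) \<in> D then S \<inter> lex r else {})"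
    unfolding C
    by (rule rel_prod_inter_lenlex_left[OF letter_to_letter_rel_length[OF S] one_sided_regular(1)[OF A D]])
  have prod: "rational_rel (rel_prod {(x, y) \<in> D. length x < length y} S)"
    by (rule rational_rel_prod[OF one_sided_regular(2)[OF A D] rational_rel_letter_to_letter[OF S]])
  have lex: "rational_rel (if ([], []) \<in> D then S \<inter> lex r else {})"
    by (rule rational_rel_if_empty[OF rational_rel_letter_to_letter_inter_lex[OF S]])
  show ?thesis unfolding eq by (rule rational_rel_Un[OF prod lex])
qed

lemma left_sync_component_converse:
  assumes "left_sync_component C"
  shows "left_sync_component (C\<inverse>)"
proof -
  obtain S A where "letter_to_letter_rel S" "regular_lang A"
    and "C = rel_prod S (A \<times> {[]}) \<or> C = rel_prod S ({[]} \<times> A)"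
    using assms unfolding left_sync_component_def by blast
  moreover from this(3) have "C\<inverse> = rel_prod (S\<inverse>) ({[]} \<times> A) \<or> C\<inverse> = rel_prod (S\<inverse>) (A \<times> {[]})"
    by (elim disjE) (simp_all add: converse_rel_prod converse_Times)
  ultimately show ?thesis
    unfolding left_sync_component_def using letter_to_letter_rel_converse by blast
qed

lemma right_sync_component_converse:
  assumes "right_sync_component C"
  shows "right_sync_component (C\<inverse>)"
proof -
  obtain S A where "letter_to_letter_rel S" "regular_lang A"
    and "C = rel_prod (A \<times> {[]}) S \<or> C = rel_prod ({[]} \<times> A) S"
    using assms unfolding right_sync_component_def by blast
  moreover from this(3) have "C\<inverse> = rel_prod ({[]} \<times> A) (S\<inverse>) \<or> C\<inverse> = rel_prod (A \<times> {[]}) (S\<inverse>)"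
    by (elim disjE) (simp_all add: converse_rel_prod converse_Times)
  ultimately show ?thesis
    unfolding right_sync_component_def using letter_to_letter_rel_converse by blast
qed

lemma left_synchronous_converse:
  assumes "left_synchronous R"
  shows "left_synchronous (R\<inverse>)"
proof -
  obtain F where "finite F" "\<forall>C\<in>F. left_sync_component C" "R = \<Union>F"
    using assms unfolding left_synchronous_def by blast
  then have "finite (converse ` F)" "\<forall>C\<in>converse ` F. left_sync_component C"
    and "R\<inverse> = \<Union>(converse ` F)"
    by (auto intro: left_sync_component_converse)
  then show ?thesis unfolding left_synchronous_def by blast
qed

lemma right_synchronous_converse:
  assumes "right_synchronous R"
  shows "right_synchronous (R\<inverse>)"
proof -
  obtain F where "finite F" "\<forall>C\<in>F. right_sync_component C" "R = \<Union>F"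
    using assms unfolding right_synchronous_def by blast
  then have "finite (converse ` F)" "\<forall>C\<in>converse ` F. right_sync_component C"
    and "R\<inverse> = \<Union>(converse ` F)"
    by (auto intro: right_sync_component_converse)
  then show ?thesis unfolding right_synchronous_def by blast
qed

lemma rational_left_synchronous_inter_lenlex:
  assumes "left_synchronous R"
  shows "rational_rel (R \<inter> lenlex r)"
proof -
  obtain F where F: "finite F" "\<forall>C\<in>F. left_sync_component C" and R: "R = \<Union>F"
    using assms unfolding left_synchronous_def by blast
  have eq: "R \<inter> lenlex r = \<Union>((\<lambda>C. C \<inter> lenlex r) ` F)" unfolding R by blast
  show ?thesis unfolding eq
    using F by (intro rational_rel_Union) (auto intro: rational_left_sync_component_inter_lenlex)
qed

lemma rational_right_synchronous_inter_lenlex: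
  assumes "right_synchronous R"
  shows "rational_rel (R \<inter> lenlex r)"
proof -
  obtain F where F: "finite F" "\<forall>C\<in>F. right_sync_component C" and R: "R = \<Union>F"
    using assms unfolding right_synchronous_def by blast
  have eq: "R \<inter> lenlex r = \<Union>((\<lambda>C. C \<inter> lenlex r) ` F)" unfolding R by blast
  show ?thesis unfolding eq
    using F by (intro rational_rel_Union) (auto intro: rational_right_sync_component_inter_lenlex)
qed

lemma rational_asym_partition_by_order:
  assumes irr: "irreflexive_rel R" and asym: "asym W" and total: "total W"
    and "rational_rel (R \<inter> W)" "rational_rel (R\<inverse> \<inter> W)"
  shows "rational_asym_partition R (R \<inter> W) (R \<inter> W\<inverse>)"
proof -
  have "R \<inter> W\<inverse> = (R\<inverse> \<inter> W)\<inverse>" by blast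
  then have "rational_rel (R \<inter> W\<inverse>)" using rational_rel_converse[OF assms(5)] by simp
  moreover have "R \<subseteq> (R \<inter> W) \<union> (R \<inter> W\<inverse>)"
  proof (rule subrelI)
    fix u v assume "(u, v) \<in> R"
    moreover from this irr have "u \<noteq> v" unfolding irreflexive_rel_def by blast
    ultimately show "(u, v) \<in> (R \<inter> W) \<union> (R \<inter> W\<inverse>)"
      using total unfolding total_on_def by blast
  qed
  moreover have "(R \<inter> W) \<inter> (R \<inter> W\<inverse>) = {}" "asymmetric_rel (R \<inter> W)" "asymmetric_rel (R \<inter> W\<inverse>)"
    using asym unfolding asymmetric_rel_def by (auto dest: asymD)
  ultimately show ?thesis
    using assms(4) unfolding rational_asym_partition_def by blast
qed

theorem corollary1:
  fixes R :: "('a::finite) wrel"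
  assumes "irreflexive_rel R"
      and "left_synchronous R \<or> right_synchronous R"
  shows "\<exists>A B. rational_asym_partition R A B"
proof -
  obtain f :: "'a \<Rightarrow> nat" where "inj f"
    using finite_imp_inj_to_nat_seg[of "UNIV :: 'a set"] by auto
  define W where "W = lenlex (inv_image less_than f)"
  have "asym W" unfolding W_def by (simp add: asym_lenlex asym_inv_image asym_less_than)
  moreover have "total W"
    unfolding W_def by (simp add: total_lenlex total_inv_image[OF \<open>inj f\<close>] total_less_than)
  moreover have "rational_rel (R \<inter> W) \<and> rational_rel (R\<inverse> \<inter> W)"
    using assms(2) unfolding W_def
    by (meson left_synchronous_converse right_synchronous_converse
        rational_left_synchronous_inter_lenlex rational_right_synchronous_inter_lenlex)
  ultimately show ?thesis
    using rational_asym_partition_by_order[OF assms(1)] by blast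
qed

end
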